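(* For every $m\ge3$ there exists $r_0(m)$ such that for all $r\ge r_0(m)$ there is no $r$-perfect code in $(\mathbb Z^m,d_a)$.
   Context: $d_a(\mathbf x,\mathbf y)=\max\{\sum_{i:x_i>y_i}(x_i-y_i),\sum_{i:x_i<y_i}(y_i-x_i)\}$ on $\mathbb Z^m$. A code $\mathcal C\subseteq\mathbb Z^m$ is $r$-perfect if the balls $\{\mathbf y: d_a(\mathbf y,\mathbf x)\le r\}$, $\mathbf x\in\mathcal C$, are pairwise disjoint and their union is $\mathbb Z^m$. *)

theory Defs
  imports Main
begin

(* Z^m is represented as integer functions on nat that vanish outside {..<m}. *)
definition Zm :: "nat \<Rightarrow> (nat \<Rightarrow> int) set" where
  "Zm m = {x. \<forall>i\<ge>m. x i = 0}"

definition d_a :: "nat \<Rightarrow> (nat \<Rightarrow> int) \<Rightarrow> (nat \<Rightarrow> int) \<Rightarrow> int" where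
  "d_a m x y = max (\<Sum>i\<in>{i. i < m \<and> x i > y i}. x i - y i)
                   (\<Sum>i\<in>{i. i < m \<and> x i < y i}. y i - x i)"

definition ball_a :: "nat \<Rightarrow> nat \<Rightarrow> (nat \<Rightarrow> int) \<Rightarrow> (nat \<Rightarrow> int) set" where
  "ball_a m r x = {y \<in> Zm m. d_a m y x \<le> int r}"

definition perfect_code :: "nat \<Rightarrow> nat \<Rightarrow> (nat \<Rightarrow> int) set \<Rightarrow> bool" where
  "perfect_code m r C \<longleftrightarrow> C \<subseteq> Zm m \<and>
     (\<forall>x\<in>C. \<forall>x'\<in>C. x \<noteq> x' \<longrightarrow> ball_a m r x \<inter> ball_a m r x' = {}) \<and>
     (\<Union>x\<in>C. ball_a m r x) = Zm m"

end

theory Submission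
  imports Defs
begin

text \<open>
  Twice \<open>d_a(x, y)\<close> is the norm \<open>\<Sum>\<bar>x\<^sub>i - y\<^sub>i\<bar> + \<bar>\<Sum>(x\<^sub>i - y\<^sub>i)\<bar>\<close>, which
  takes even values and is geodesic (it decreases by 2 along suitable unit steps), so distinct
  codewords of an \<open>r\<close>-perfect code lie at norm distance at least \<open>4r + 2\<close>.
  Fix a codeword \<open>b\<close>. A point \<open>b + x\<close> with all \<open>x\<^sub>i \<ge> 1\<close> and \<open>\<Sum>x\<^sub>i = r + 1\<close> lies just
  outside the ball around \<open>b\<close>, and the codeword covering it has the form \<open>b + y\<close> with \<open>y \<ge> x\<close>
  and \<open>\<Sum>y\<^sub>i = 2r + 1\<close>. Two such codewords are too close to be distinct, so one codeword
  covers all these points. Taking for \<open>x\<close> the vectors with one entry \<open>r + 2 - m\<close> and all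
  others \<open>1\<close>, its coordinate sum exceeds \<open>2r + 1\<close> as soon as \<open>m \<ge> 3\<close> and \<open>r \<ge> 2m\<close>.
\<close>

definition asym_norm :: "nat \<Rightarrow> (nat \<Rightarrow> int) \<Rightarrow> int" where
  "asym_norm m v = (\<Sum>i<m. \<bar>v i\<bar>) + \<bar>\<Sum>i<m. v i\<bar>"

lemma double_d_a_eq_asym_norm: "2 * d_a m x y = asym_norm m (\<lambda>i. x i - y i)"
proof -
  let ?pos = "\<lambda>i. if x i > y i then x i - y i else 0"
  let ?neg = "\<lambda>i. if x i < y i then y i - x i else 0"
  have "(\<Sum>i\<in>{i. i < m \<and> x i > y i}. x i - y i) = (\<Sum>i<m. ?pos i)"
    by (simp add: sum.inter_filter[symmetric] conj_commute)
  moreover have "(\<Sum>i\<in>{i. i < m \<and> x i < y i}. y i - x i) = (\<Sum>i<m. ?neg i)"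
    by (simp add: sum.inter_filter[symmetric] conj_commute)
  moreover have "(\<Sum>i<m. \<bar>x i - y i\<bar>) = (\<Sum>i<m. ?pos i) + (\<Sum>i<m. ?neg i)"
    unfolding sum.distrib[symmetric] by (rule sum.cong) auto
  moreover have "(\<Sum>i<m. x i - y i) = (\<Sum>i<m. ?pos i) - (\<Sum>i<m. ?neg i)"
    unfolding sum_subtractf[symmetric] by (rule sum.cong) auto
  ultimately show ?thesis
    unfolding d_a_def asym_norm_def by arith
qed

lemma mem_ball_a_iff:
  "z \<in> ball_a m r c \<longleftrightarrow> z \<in> Zm m \<and> asym_norm m (\<lambda>i. z i - c i) \<le> 2 * int r"
  unfolding ball_a_def using double_d_a_eq_asym_norm[of m z c] by auto

lemma Zm_add: "a \<in> Zm m \<Longrightarrow> b \<in> Zm m \<Longrightarrow> (\<lambda>j. a j + b j) \<in> Zm m"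
  unfolding Zm_def by auto

lemma asym_norm_uminus: "asym_norm m (\<lambda>i. - v i) = asym_norm m v"
  unfolding asym_norm_def by (simp add: sum_negf)

lemma asym_norm_diff_commute: "asym_norm m (\<lambda>i. x i - y i) = asym_norm m (\<lambda>i. y i - x i)"
  using asym_norm_uminus[of m "\<lambda>i. x i - y i"] by simp

lemma asym_norm_add_le: "asym_norm m (\<lambda>i. a i + b i) \<le> asym_norm m a + asym_norm m b"
proof -
  have "(\<Sum>i<m. \<bar>a i + b i\<bar>) \<le> (\<Sum>i<m. \<bar>a i\<bar> + \<bar>b i\<bar>)"
    by (rule sum_mono) (rule abs_triangle_ineq)
  moreover have "\<bar>\<Sum>i<m. a i + b i\<bar> \<le> \<bar>\<Sum>i<m. a i\<bar> + \<bar>\<Sum>i<m. b i\<bar>"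
    by (simp add: sum.distrib abs_triangle_ineq)
  ultimately show ?thesis
    unfolding asym_norm_def by (simp add: sum.distrib)
qed

lemma even_asym_norm: "even (asym_norm m v)"
proof -
  have "asym_norm m v = (\<Sum>i<m. \<bar>v i\<bar> - v i) + ((\<Sum>i<m. v i) + \<bar>\<Sum>i<m. v i\<bar>)"
    unfolding asym_norm_def by (simp add: sum_subtractf)
  moreover have "even (\<Sum>i<m. \<bar>v i\<bar> - v i)"
    by (rule dvd_sum) (auto simp: abs_if)
  moreover have "even ((\<Sum>i<m. v i) + \<bar>\<Sum>i<m. v i\<bar>)"
    by (auto simp: abs_if)
  ultimately show ?thesis by simp
qed

lemma asym_norm_nonneg_coords:
  assumes "\<forall>i<m. v i \<ge> 0"
  shows "asym_norm m v = 2 * (\<Sum>i<m. v i)"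
proof -
  have "(\<Sum>i<m. \<bar>v i\<bar>) = (\<Sum>i<m. v i)"
    using assms by (intro sum.cong) auto
  moreover have "(\<Sum>i<m. v i) \<ge> 0"
    using assms by (intro sum_nonneg) auto
  ultimately show ?thesis
    unfolding asym_norm_def by simp
qed

definition unit_vec :: "nat \<Rightarrow> nat \<Rightarrow> int" where
  "unit_vec i = (\<lambda>j. if j = i then 1 else 0)"

lemma sum_diff_unit_vec: "i < m \<Longrightarrow> (\<Sum>j<m. v j - unit_vec i j) = (\<Sum>j<m. v j) - 1"
  by (simp add: sum_subtractf unit_vec_def)

lemma sum_abs_diff_unit_vec:
  assumes "i < m" "v i > 0"
  shows "(\<Sum>j<m. \<bar>v j - unit_vec i j\<bar>) = (\<Sum>j<m. \<bar>v j\<bar>) - 1"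
proof -
  have "(\<Sum>j<m. \<bar>v j - unit_vec i j\<bar>) = (\<Sum>j<m. \<bar>v j\<bar> - unit_vec i j)"
    using assms by (intro sum.cong) (auto simp: unit_vec_def)
  then show ?thesis
    using sum_diff_unit_vec[OF assms(1)] by simp
qed

lemma asym_norm_diff_unit_vec:
  assumes "i < m" "v i > 0" "(\<Sum>j<m. v j) > 0"
  shows "asym_norm m (\<lambda>j. v j - unit_vec i j) = asym_norm m v - 2"
  using assms unfolding asym_norm_def sum_abs_diff_unit_vec[of i m v, OF assms(1,2)] sum_diff_unit_vec[OF assms(1)]
  by simp

lemma asym_norm_diff_unit_vec_pair:
  assumes i: "i < m" "v i > 0" and k: "k < m" "v k < 0" and zero: "(\<Sum>j<m. v j) = 0"
  shows "asym_norm m (\<lambda>j. v j - (unit_vec i j - unit_vec k j)) = asym_norm m v - 2"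
proof -
  define u where "u j = unit_vec i j - v j" for j
  have "u k > 0" using i k unfolding u_def unit_vec_def by auto
  have "(\<Sum>j<m. \<bar>u j\<bar>) = (\<Sum>j<m. \<bar>v j\<bar>) - 1"
    using sum_abs_diff_unit_vec[of i m v, OF i] unfolding u_def by (simp add: abs_minus_commute)
  then have "(\<Sum>j<m. \<bar>u j - unit_vec k j\<bar>) = (\<Sum>j<m. \<bar>v j\<bar>) - 2"
    using sum_abs_diff_unit_vec[of k m u, OF k(1) \<open>u k > 0\<close>] by simp
  moreover have "(\<Sum>j<m. u j - unit_vec k j) = 0"
    using sum_diff_unit_vec[OF k(1), of u] zero i(1) unfolding u_def
    by (simp add: sum_subtractf unit_vec_def)
  ultimately have "asym_norm m (\<lambda>j. u j - unit_vec k j) = asym_norm m v - 2"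
    using zero unfolding asym_norm_def by simp
  moreover have "(\<lambda>j. v j - (unit_vec i j - unit_vec k j)) = (\<lambda>j. - (u j - unit_vec k j))"
    unfolding u_def by auto
  ultimately show ?thesis
    by (simp only: asym_norm_uminus)
qed

lemma asym_norm_unit_vec_pair:
  assumes "i < m" "k < m" "i \<noteq> k"
  shows "asym_norm m (\<lambda>j. unit_vec i j - unit_vec k j) = 2"
proof -
  have "(\<Sum>j<m. \<bar>unit_vec i j - unit_vec k j\<bar>) = (\<Sum>j<m. unit_vec i j + unit_vec k j)"
    using assms by (intro sum.cong) (auto simp: unit_vec_def)
  then show ?thesis
    using assms unfolding asym_norm_def by (simp add: sum.distrib sum_subtractf unit_vec_def)
qed

lemma asym_norm_descent_nonneg_sum:
  assumes sum: "(\<Sum>j<m. v j) \<ge> 0" and pos: "asym_norm m v > 0"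
  shows "\<exists>w \<in> Zm m. asym_norm m w \<le> 2 \<and> asym_norm m (\<lambda>j. v j - w j) \<le> asym_norm m v - 2"
proof -
  have "\<exists>i<m. v i \<noteq> 0"
  proof (rule ccontr)
    assume "\<not> (\<exists>i<m. v i \<noteq> 0)"
    then show False using pos unfolding asym_norm_def by simp
  qed
  then obtain i0 where "i0 < m" "v i0 \<noteq> 0" by blast
  have "\<exists>i<m. v i > 0"
  proof (rule ccontr)
    assume "\<not> (\<exists>i<m. v i > 0)"
    then have "(\<Sum>j<m. v j) < 0"
      using \<open>i0 < m\<close> \<open>v i0 \<noteq> 0\<close> sum_strict_mono_ex1[of "{..<m}" v "\<lambda>_. 0"] by force
    then show False using sum by simp
  qed
  then obtain i where i: "i < m" "v i > 0" by blast
  show ?thesis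
  proof (cases "(\<Sum>j<m. v j) > 0")
    case True
    moreover have "unit_vec i \<in> Zm m" "asym_norm m (unit_vec i) = 2"
      using i by (auto simp: Zm_def unit_vec_def asym_norm_def)
    ultimately show ?thesis
      using asym_norm_diff_unit_vec[of i m v, OF i] by (intro bexI[of _ "unit_vec i"]) auto
  next
    case False
    then have zero: "(\<Sum>j<m. v j) = 0" using sum by simp
    have "\<exists>k<m. v k < 0"
    proof (rule ccontr)
      assume "\<not> (\<exists>k<m. v k < 0)"
      then have "(\<Sum>j<m. v j) > 0"
        using i sum_strict_mono_ex1[of "{..<m}" "\<lambda>_. 0" v] by force
      then show False using zero by simp
    qed
    then obtain k where k: "k < m" "v k < 0" by blast
    have "i \<noteq> k" using i k by auto
    have "(\<lambda>j. unit_vec i j - unit_vec k j) \<in> Zm m"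
      using i k by (auto simp: Zm_def unit_vec_def)
    then show ?thesis
      using asym_norm_diff_unit_vec_pair[of i m v, OF i k zero]
        asym_norm_unit_vec_pair[OF i(1) k(1) \<open>i \<noteq> k\<close>]
      by (intro bexI[of _ "\<lambda>j. unit_vec i j - unit_vec k j"]) auto
  qed
qed

lemma asym_norm_descent:
  assumes "asym_norm m v > 0"
  shows "\<exists>w \<in> Zm m. asym_norm m w \<le> 2 \<and> asym_norm m (\<lambda>j. v j - w j) \<le> asym_norm m v - 2"
proof (cases "(\<Sum>j<m. v j) \<ge> 0")
  case True
  then show ?thesis using asym_norm_descent_nonneg_sum assms by blast
next
  case False
  then have "(\<Sum>j<m. - v j) \<ge> 0" by (simp add: sum_negf)
  moreover have "asym_norm m (\<lambda>j. - v j) > 0" using assms by (simp add: asym_norm_uminus)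
  ultimately obtain w where w: "w \<in> Zm m" "asym_norm m w \<le> 2"
    "asym_norm m (\<lambda>j. - v j - w j) \<le> asym_norm m v - 2"
    using asym_norm_descent_nonneg_sum[where v = "\<lambda>j. - v j"] by (auto simp: asym_norm_uminus)
  have "(\<lambda>j. - v j - w j) = (\<lambda>j. - (v j - - w j))" by simp
  then have "asym_norm m (\<lambda>j. v j - - w j) \<le> asym_norm m v - 2"
    using w(3) by (simp only: asym_norm_uminus)
  moreover have "(\<lambda>j. - w j) \<in> Zm m" using w(1) by (simp add: Zm_def)
  ultimately show ?thesis
    using w(2) by (intro bexI[of _ "\<lambda>j. - w j"]) (auto simp: asym_norm_uminus)
qed

lemma asym_norm_split:
  "asym_norm m v \<le> 2 * int s + 2 * int t \<Longrightarrow>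
   \<exists>w \<in> Zm m. asym_norm m w \<le> 2 * int s \<and> asym_norm m (\<lambda>j. v j - w j) \<le> 2 * int t"
proof (induction s arbitrary: v)
  case 0
  have "(\<lambda>j. 0) \<in> Zm m" "asym_norm m (\<lambda>j. 0) = 0"
    by (simp_all add: Zm_def asym_norm_def)
  with 0 show ?case
    by (intro bexI[of _ "\<lambda>j. 0"]) auto
next
  case (Suc s)
  show ?case
  proof (cases "asym_norm m v \<le> 2 * int s + 2 * int t")
    case True
    then obtain w where "w \<in> Zm m" "asym_norm m w \<le> 2 * int s"
      "asym_norm m (\<lambda>j. v j - w j) \<le> 2 * int t"
      using Suc.IH by blast
    then show ?thesis by (intro bexI[of _ w]) auto
  next
    case False
    then obtain w1 where w1: "w1 \<in> Zm m" "asym_norm m w1 \<le> 2"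
      "asym_norm m (\<lambda>j. v j - w1 j) \<le> asym_norm m v - 2"
      using asym_norm_descent[of m v] by force
    then obtain w2 where w2: "w2 \<in> Zm m" "asym_norm m w2 \<le> 2 * int s"
      "asym_norm m (\<lambda>j. v j - w1 j - w2 j) \<le> 2 * int t"
      using Suc.IH[of "\<lambda>j. v j - w1 j"] Suc.prems by force
    have "asym_norm m (\<lambda>j. w1 j + w2 j) \<le> 2 * int (Suc s)"
      using asym_norm_add_le[of m w1 w2] w1(2) w2(2) by simp
    moreover have "(\<lambda>j. v j - (w1 j + w2 j)) = (\<lambda>j. v j - w1 j - w2 j)"
      by (simp add: algebra_simps)
    ultimately show ?thesis
      using w2(3) Zm_add[OF w1(1) w2(1)] by (intro bexI[of _ "\<lambda>j. w1 j + w2 j"]) auto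
  qed
qed

lemma perfect_code_separated:
  assumes code: "perfect_code m r C" and c: "c \<in> C" "c' \<in> C" "c \<noteq> c'"
  shows "asym_norm m (\<lambda>i. c i - c' i) \<ge> 4 * int r + 2"
proof (rule ccontr)
  assume "\<not> ?thesis"
  then have "asym_norm m (\<lambda>i. c i - c' i) \<le> 2 * int r + 2 * int r"
    using even_asym_norm[of m "\<lambda>i. c i - c' i"] by (auto elim!: evenE)
  then obtain w where w: "w \<in> Zm m" "asym_norm m w \<le> 2 * int r"
    "asym_norm m (\<lambda>j. c j - c' j - w j) \<le> 2 * int r"
    using asym_norm_split by blast
  define z where "z j = c' j + w j" for j
  have "z \<in> Zm m"
    unfolding z_def using Zm_add w(1) c(2) code by (auto simp: perfect_code_def)
  moreover have "(\<lambda>j. z j - c j) = (\<lambda>j. - (c j - c' j - w j))"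
    unfolding z_def by (simp add: algebra_simps)
  then have "asym_norm m (\<lambda>j. z j - c j) \<le> 2 * int r"
    using w(3) by (simp only: asym_norm_uminus)
  ultimately have "z \<in> ball_a m r c" "z \<in> ball_a m r c'"
    using w(2) by (auto simp: mem_ball_a_iff z_def)
  then show False
    using code c unfolding perfect_code_def by blast
qed

lemma dominates_if_near_and_far:
  assumes x_pos: "\<forall>i<m. x i \<ge> 1" and x_sum: "(\<Sum>i<m. x i) = int r + 1"
    and near: "asym_norm m (\<lambda>i. x i - y i) \<le> 2 * int r"
    and far: "asym_norm m y \<ge> 4 * int r + 2"
  shows "(\<forall>i<m. x i \<le> y i) \<and> (\<Sum>i<m. y i) = 2 * int r + 1"
proof -
  have norm_x: "asym_norm m x = 2 * int r + 2"
    using asym_norm_nonneg_coords[of m x] x_pos x_sum by force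
  have dominates: "\<forall>i<m. x i \<le> y i"
  proof (rule ccontr)
    assume "\<not> (\<forall>i<m. x i \<le> y i)"
    then obtain i where i: "i < m" "y i < x i" by auto
    \<comment> \<open>at \<open>i\<close> the triangle inequality \<open>\<bar>y i\<bar> \<le> \<bar>x i - y i\<bar> + \<bar>x i\<bar>\<close> is strict\<close>
    have "(\<Sum>j<m. \<bar>y j\<bar>) < (\<Sum>j<m. \<bar>x j - y j\<bar> + \<bar>x j\<bar>)"
      using i x_pos by (intro sum_strict_mono_ex1) (auto intro!: bexI[of _ i])
    moreover have "\<bar>\<Sum>j<m. y j\<bar> \<le> \<bar>\<Sum>j<m. x j - y j\<bar> + \<bar>\<Sum>j<m. x j\<bar>"
      by (simp add: sum_subtractf)
    ultimately have "asym_norm m y < asym_norm m (\<lambda>i. x i - y i) + asym_norm m x"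
      unfolding asym_norm_def by (simp add: sum.distrib)
    then show False using near far norm_x by linarith
  qed
  have "asym_norm m y \<le> asym_norm m x + asym_norm m (\<lambda>i. y i - x i)"
    using asym_norm_add_le[of m x "\<lambda>i. y i - x i"] by simp
  then have "asym_norm m y \<le> 4 * int r + 2"
    using near norm_x asym_norm_diff_commute[of m x y] by linarith
  moreover have "asym_norm m y = 2 * (\<Sum>i<m. y i)"
    using dominates x_pos by (intro asym_norm_nonneg_coords) force
  ultimately have "(\<Sum>i<m. y i) = 2 * int r + 1"
    using far by linarith
  with dominates show ?thesis by blast
qed

lemma perfect_code_codeword_above:
  assumes code: "perfect_code m r C" and b: "b \<in> C"
    and x: "x \<in> Zm m" "\<forall>i<m. x i \<ge> 1" "(\<Sum>i<m. x i) = int r + 1"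
  shows "\<exists>c\<in>C. (\<forall>i<m. x i \<le> c i - b i) \<and> (\<Sum>i<m. c i - b i) = 2 * int r + 1"
proof -
  define p where "p j = b j + x j" for j
  have "p \<in> Zm m"
    unfolding p_def using Zm_add x(1) b code by (auto simp: perfect_code_def)
  then obtain c where c: "c \<in> C" "p \<in> ball_a m r c"
    using code unfolding perfect_code_def by blast
  have near: "asym_norm m (\<lambda>i. x i - (c i - b i)) \<le> 2 * int r"
    using c(2) by (simp add: mem_ball_a_iff p_def algebra_simps)
  have "asym_norm m x = 2 * int r + 2"
    using asym_norm_nonneg_coords[of m x] x by force
  then have "p \<notin> ball_a m r b"
    by (simp add: mem_ball_a_iff p_def)
  then have "c \<noteq> b" using c(2) by blast
  then have "asym_norm m (\<lambda>i. c i - b i) \<ge> 4 * int r + 2"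
    using perfect_code_separated[OF code c(1) b] by simp
  with dominates_if_near_and_far[OF x(2,3) near] c(1) show ?thesis by blast
qed

lemma perfect_code_codeword_above_unique:
  assumes code: "perfect_code m r C" and "m \<ge> 1" and "c \<in> C" "c' \<in> C"
    and "\<forall>i<m. c i - b i \<ge> 1" "\<forall>i<m. c' i - b i \<ge> 1"
    and "(\<Sum>i<m. c i - b i) = 2 * int r + 1" "(\<Sum>i<m. c' i - b i) = 2 * int r + 1"
  shows "c = c'"
proof (rule ccontr)
  assume "c \<noteq> c'"
  then have far: "asym_norm m (\<lambda>i. c i - c' i) \<ge> 4 * int r + 2"
    using perfect_code_separated[OF code \<open>c \<in> C\<close> \<open>c' \<in> C\<close>] by simp
  have "(\<Sum>i<m. \<bar>c i - c' i\<bar>) \<le> (\<Sum>i<m. (c i - b i) + (c' i - b i) - 2)"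
    using assms by (intro sum_mono) force
  also have "\<dots> = 4 * int r + 2 - 2 * int m"
    by (subst sum_subtractf, subst sum.distrib) (simp add: assms)
  finally have "(\<Sum>i<m. \<bar>c i - c' i\<bar>) \<le> 4 * int r + 2 - 2 * int m" .
  moreover have "(\<Sum>i<m. c i - c' i) = 0"
    using assms by (simp add: sum_subtractf)
  ultimately show False
    using far \<open>m \<ge> 1\<close> unfolding asym_norm_def by simp
qed

lemma perfect_code_common_codeword_above:
  assumes code: "perfect_code m r C" and b: "b \<in> C" and "m \<ge> 1"
  obtains c where "c \<in> C" "(\<Sum>i<m. c i - b i) \<le> 2 * int r + 1"
    "\<And>x. x \<in> Zm m \<Longrightarrow> \<forall>i<m. x i \<ge> 1 \<Longrightarrow> (\<Sum>i<m. x i) = int r + 1 \<Longrightarrow> \<forall>i<m. x i \<le> c i - b i"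
proof (cases "\<exists>x0 \<in> Zm m. (\<forall>i<m. x0 i \<ge> 1) \<and> (\<Sum>i<m. x0 i) = int r + 1")
  case True
  then obtain x0 where x0: "x0 \<in> Zm m" "\<forall>i<m. x0 i \<ge> 1" "(\<Sum>i<m. x0 i) = int r + 1"
    by blast
  obtain c where c: "c \<in> C" "\<forall>i<m. x0 i \<le> c i - b i" "(\<Sum>i<m. c i - b i) = 2 * int r + 1"
    using perfect_code_codeword_above[OF code b x0] by blast
  have "\<forall>i<m. x i \<le> c i - b i"
    if x: "x \<in> Zm m" "\<forall>i<m. x i \<ge> 1" "(\<Sum>i<m. x i) = int r + 1" for x
  proof -
    obtain c' where c': "c' \<in> C" "\<forall>i<m. x i \<le> c' i - b i" "(\<Sum>i<m. c' i - b i) = 2 * int r + 1"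
      using perfect_code_codeword_above[OF code b x] by blast
    have "\<forall>i<m. c i - b i \<ge> 1" "\<forall>i<m. c' i - b i \<ge> 1"
      using c(2) c'(2) x0(2) x(2) by force+
    then have "c' = c"
      using perfect_code_codeword_above_unique[OF code \<open>m \<ge> 1\<close> c'(1) c(1)] c(3) c'(3) by simp
    with c'(2) show ?thesis by simp
  qed
  with c(1,3) that show thesis by simp
next
  case False
  show thesis
    by (rule that[OF b]) (use False in auto)
qed

lemma no_perfect_code_large_radius:
  assumes "m \<ge> 3" and "r \<ge> 2 * m"
  shows "\<not> perfect_code m r C"
proof
  assume code: "perfect_code m r C"
  have "(\<lambda>_. 0) \<in> Zm m" by (simp add: Zm_def)
  with code obtain b where b: "b \<in> C"
    unfolding perfect_code_def by blast
  have "m \<ge> 1" using assms(1) by simp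
  obtain c where sum_c: "(\<Sum>i<m. c i - b i) \<le> 2 * int r + 1" and above:
    "\<And>x. x \<in> Zm m \<Longrightarrow> \<forall>i<m. x i \<ge> 1 \<Longrightarrow> (\<Sum>i<m. x i) = int r + 1 \<Longrightarrow> \<forall>i<m. x i \<le> c i - b i"
    using perfect_code_common_codeword_above[OF code b \<open>m \<ge> 1\<close>] by blast
  define A where "A = int r + 2 - int m"
  have "A \<ge> 1"
    using assms unfolding A_def by linarith
  have "A \<le> c k - b k" if k: "k < m" for k
  proof -
    define x where "x j = (if j < m then if j = k then A else 1 else 0)" for j
    have "(\<Sum>i<m. x i) = (\<Sum>i<m. 1 + (if i = k then A - 1 else 0))"
      by (intro sum.cong) (auto simp: x_def)
    then have "(\<Sum>i<m. x i) = int r + 1"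
      using k by (simp add: sum.distrib A_def)
    moreover have "x \<in> Zm m" "\<forall>i<m. x i \<ge> 1"
      using \<open>A \<ge> 1\<close> by (auto simp: x_def Zm_def)
    ultimately show ?thesis
      using above[of x] k by (force simp: x_def)
  qed
  \<comment> \<open>three coordinates of size \<open>A\<close> already suffice, and keep the final estimate linear\<close>
  then have "(\<Sum>i<m. 1 + (A - 1) * (if i < 3 then 1 else 0)) \<le> (\<Sum>i<m. c i - b i)"
    using \<open>A \<ge> 1\<close> by (intro sum_mono) force
  moreover have "(\<Sum>i<m. 1 + (A - 1) * (if i < 3 then 1 else 0)) = int m + 3 * (A - 1)"
  proof -
    have "{i \<in> {..<m}. i < 3} = {..<3}"
      using assms(1) by auto
    then have "(\<Sum>i<m. if i < 3 then 1 else 0) = (3::int)"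
      by (simp add: sum.inter_filter[symmetric])
    then show ?thesis
      by (simp add: sum.distrib sum_distrib_left[symmetric])
  qed
  ultimately have "int m + 3 * (A - 1) \<le> 2 * int r + 1"
    using sum_c by linarith
  moreover have "2 * int m \<le> int r"
    using assms(2) by linarith
  ultimately show False
    unfolding A_def by (simp add: algebra_simps)
qed

theorem mainTheorem11:
  shows "\<forall>m::nat. m \<ge> 3 \<longrightarrow> (\<exists>r0::nat. \<forall>r\<ge>r0. \<not> (\<exists>C. perfect_code m r C))"
proof (intro allI impI)
  fix m :: nat
  assume "m \<ge> 3"
  then show "\<exists>r0. \<forall>r\<ge>r0. \<not> (\<exists>C. perfect_code m r C)"
    using no_perfect_code_large_radius by blast
qed

end
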